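(* Let $(\Delta,\mathcal H)$ be a generic cut with associated simplicial complexes $K_\Delta,K_+,K_-$ on $\widetilde{[m]}=[m]\cup\{o\}$. For $\sigma\subset\widetilde{[m]}$ let $F_\sigma=\bigcap_{i\in\sigma}H_i$, and let $Z=\{\sigma\subset\widetilde{[m]}: F_\sigma\neq\varnothing\text{ and }F_\sigma\subset\Delta_+\setminus H_o\}$. Then $$K_+\cap K_\Delta=\overline Z,\qquad (K_+\cup K_\Delta)\setminus K_-=Z.$$
   Context: Let $\Delta\subset\mathbb R^n$ be an $n$-dimensional simple polytope $\Delta=\{x:\langle x,\lambda_i\rangle+\eta_i\ge0,\ i=1,\dots,m\}$ whose facets $H_i=\Delta\cap\{\langle x,\lambda_i\rangle+\eta_i=0\}$ are all nonempty. A generic cut is a hyperplane $\mathcal H=\{\langle x,\lambda_0\rangle+\xi=0\}$ in general position with the hyperplanes $\{\langle x,\lambda_i\rangle+\eta_i=0\}$ and with $H_o:=\mathcal H\cap\Delta\neq\varnothing$ (so $H_o$ is the facet indexed by $o$). Set $\Delta_\pm=\Delta\cap\{\pm(\langle x,\lambda_0\rangle+\xi)\ge0\}$, $K_\Delta=\{\sigma\subset[m]:\bigcap_{i\in\sigma}H_i\ne\varnothing\}\cup\{\varnothing\}$, $K_\pm=\{\sigma\subset\widetilde{[m]}:\bigcap_{i\in\sigma}(H_i\cap\Delta_\pm)\ne\varnothing\}\cup\{\varnothing\}$. $\overline Z$ denotes the smallest simplicial complex containing $Z$ (all subsets of members of $Z$). *)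

theory Defs
  imports "HOL-Analysis.Analysis"
begin

text \<open>The facet index set is [m] = {1..m}; the extra index o of the cut
  facet is encoded as 0, so the extended index set is {0..m}.\<close>

definition nrm :: "(nat \<Rightarrow> 'a::euclidean_space) \<Rightarrow> 'a \<Rightarrow> nat \<Rightarrow> 'a" where
  "nrm lam lam0 i = (if i = 0 then lam0 else lam i)"

definition ofs :: "(nat \<Rightarrow> real) \<Rightarrow> real \<Rightarrow> nat \<Rightarrow> real" where
  "ofs eta xi i = (if i = 0 then xi else eta i)"

definition hyp :: "(nat \<Rightarrow> 'a::euclidean_space) \<Rightarrow> (nat \<Rightarrow> real) \<Rightarrow> 'a \<Rightarrow> real \<Rightarrow> nat \<Rightarrow> 'a set" where
  "hyp lam eta lam0 xi i = {x. inner x (nrm lam lam0 i) + ofs eta xi i = 0}"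

definition polyt :: "nat \<Rightarrow> (nat \<Rightarrow> 'a::euclidean_space) \<Rightarrow> (nat \<Rightarrow> real) \<Rightarrow> 'a set" where
  "polyt m lam eta = {x. \<forall>i\<in>{1..m}. inner x (lam i) + eta i \<ge> 0}"

definition facet :: "nat \<Rightarrow> (nat \<Rightarrow> 'a::euclidean_space) \<Rightarrow> (nat \<Rightarrow> real) \<Rightarrow> 'a \<Rightarrow> real \<Rightarrow> nat \<Rightarrow> 'a set" where
  "facet m lam eta lam0 xi i = polyt m lam eta \<inter> hyp lam eta lam0 xi i"

definition Dplus :: "nat \<Rightarrow> (nat \<Rightarrow> 'a::euclidean_space) \<Rightarrow> (nat \<Rightarrow> real) \<Rightarrow> 'a \<Rightarrow> real \<Rightarrow> 'a set" where
  "Dplus m lam eta lam0 xi = polyt m lam eta \<inter> {x. inner x lam0 + xi \<ge> 0}"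

definition Dminus :: "nat \<Rightarrow> (nat \<Rightarrow> 'a::euclidean_space) \<Rightarrow> (nat \<Rightarrow> real) \<Rightarrow> 'a \<Rightarrow> real \<Rightarrow> 'a set" where
  "Dminus m lam eta lam0 xi = polyt m lam eta \<inter> {x. - (inner x lam0 + xi) \<ge> 0}"

definition simple_polytope :: "nat \<Rightarrow> (nat \<Rightarrow> 'a::euclidean_space) \<Rightarrow> (nat \<Rightarrow> real) \<Rightarrow> bool" where
  "simple_polytope m lam eta \<longleftrightarrow>
     bounded (polyt m lam eta) \<and> interior (polyt m lam eta) \<noteq> {} \<and>
     (\<forall>i\<in>{1..m}. lam i \<noteq> 0 \<and> polyt m lam eta \<inter> {x. inner x (lam i) + eta i = 0} \<noteq> {}) \<and>
     (\<forall>x\<in>polyt m lam eta.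
        let I = {i\<in>{1..m}. inner x (lam i) + eta i = 0}
        in inj_on lam I \<and> independent (lam ` I))"

definition generic_cut :: "nat \<Rightarrow> (nat \<Rightarrow> 'a::euclidean_space) \<Rightarrow> (nat \<Rightarrow> real) \<Rightarrow> 'a \<Rightarrow> real \<Rightarrow> bool" where
  "generic_cut m lam eta lam0 xi \<longleftrightarrow>
     lam0 \<noteq> 0 \<and> facet m lam eta lam0 xi 0 \<noteq> {} \<and>
     (\<forall>x\<in>polyt m lam eta.
        let I = {i\<in>{0..m}. x \<in> hyp lam eta lam0 xi i}
        in inj_on (nrm lam lam0) I \<and> independent (nrm lam lam0 ` I))"

definition K_Delta :: "nat \<Rightarrow> (nat \<Rightarrow> 'a::euclidean_space) \<Rightarrow> (nat \<Rightarrow> real) \<Rightarrow> 'a \<Rightarrow> real \<Rightarrow> nat set set" where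
  "K_Delta m lam eta lam0 xi =
     {\<sigma>. \<sigma> \<subseteq> {1..m} \<and> (\<Inter>i\<in>\<sigma>. facet m lam eta lam0 xi i) \<noteq> {}} \<union> {{}}"

definition K_plus :: "nat \<Rightarrow> (nat \<Rightarrow> 'a::euclidean_space) \<Rightarrow> (nat \<Rightarrow> real) \<Rightarrow> 'a \<Rightarrow> real \<Rightarrow> nat set set" where
  "K_plus m lam eta lam0 xi =
     {\<sigma>. \<sigma> \<subseteq> {0..m} \<and>
        (\<Inter>i\<in>\<sigma>. facet m lam eta lam0 xi i \<inter> Dplus m lam eta lam0 xi) \<noteq> {}} \<union> {{}}"

definition K_minus :: "nat \<Rightarrow> (nat \<Rightarrow> 'a::euclidean_space) \<Rightarrow> (nat \<Rightarrow> real) \<Rightarrow> 'a \<Rightarrow> real \<Rightarrow> nat set set" where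
  "K_minus m lam eta lam0 xi =
     {\<sigma>. \<sigma> \<subseteq> {0..m} \<and>
        (\<Inter>i\<in>\<sigma>. facet m lam eta lam0 xi i \<inter> Dminus m lam eta lam0 xi) \<noteq> {}} \<union> {{}}"

text \<open>F_sigma, intersected with the polytope (so F_{} = Delta).\<close>
definition Fsig :: "nat \<Rightarrow> (nat \<Rightarrow> 'a::euclidean_space) \<Rightarrow> (nat \<Rightarrow> real) \<Rightarrow> 'a \<Rightarrow> real \<Rightarrow> nat set \<Rightarrow> 'a set" where
  "Fsig m lam eta lam0 xi \<sigma> = polyt m lam eta \<inter> (\<Inter>i\<in>\<sigma>. facet m lam eta lam0 xi i)"

definition Zset :: "nat \<Rightarrow> (nat \<Rightarrow> 'a::euclidean_space) \<Rightarrow> (nat \<Rightarrow> real) \<Rightarrow> 'a \<Rightarrow> real \<Rightarrow> nat set set" where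
  "Zset m lam eta lam0 xi =
     {\<sigma>. \<sigma> \<subseteq> {0..m} \<and> Fsig m lam eta lam0 xi \<sigma> \<noteq> {} \<and>
        Fsig m lam eta lam0 xi \<sigma> \<subseteq> Dplus m lam eta lam0 xi - facet m lam eta lam0 xi 0}"

definition sc_closure :: "'b set set \<Rightarrow> 'b set set" where
  "sc_closure Z = {\<tau>. \<exists>\<sigma>\<in>Z. \<tau> \<subseteq> \<sigma>}"

end

theory Submission
  imports Defs
begin

(* Both sides of the first identity consist of the sigma in [m] whose face F_sigma meets Delta_+.
   For the closure of Z this rests on one geometric fact: such a face contains a vertex v of Delta
   with <v, lam0> + xi > 0, and then the set of facets through v lies in Z and contains sigma.
   Take for v an extreme point of the face of F_sigma on which <x, lam0> is maximal. At an extreme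
   point of Delta the active facet normals span the space, so these facets cut out exactly {v};
   and v is not on the cut, since lam0 together with these normals would then be linearly
   dependent, contradicting genericity. The second identity is bookkeeping: sigma lies in
   (K_+ u K_Delta) - K_- exactly when F_sigma is nonempty and disjoint from Delta_-. *)

lemma inequalities_eq_Inter_halfspaces:
  "{y. \<forall>i\<in>A. inner y (a i) + b i \<ge> 0} = (\<Inter>i\<in>A. {y. inner (a i) y \<ge> - b i})"
  by (fastforce simp: inner_commute)

lemma convex_inequalities: "convex {y. \<forall>i\<in>A. inner y (a i) + b i \<ge> 0}"
  by (simp add: inequalities_eq_Inter_halfspaces convex_INT convex_halfspace_ge)

lemma closed_inequalities: "closed {y. \<forall>i\<in>A. inner y (a i) + b i \<ge> 0}"
  by (simp add: inequalities_eq_Inter_halfspaces closed_INT closed_halfspace_ge)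

lemma face_of_inequalities_active:
  fixes A :: "'i set" and a :: "'i \<Rightarrow> 'a::euclidean_space" and b :: "'i \<Rightarrow> real"
  defines "P \<equiv> {y. \<forall>i\<in>A. inner y (a i) + b i \<ge> 0}"
  assumes "\<sigma> \<subseteq> A"
  shows "{y\<in>P. \<forall>i\<in>\<sigma>. inner y (a i) + b i = 0} face_of P"
proof -
  have "convex P"
    by (simp add: P_def convex_inequalities)
  have "P \<inter> {y. a i \<bullet> y = - b i} face_of P" if "i \<in> \<sigma>" for i
    using that assms(2) \<open>convex P\<close>
    by (intro face_of_Int_supporting_hyperplane_ge) (auto simp: P_def inequalities_eq_Inter_halfspaces)
  moreover have "P face_of P"
    using \<open>convex P\<close> by (rule face_of_refl)
  ultimately have "\<Inter> (insert P ((\<lambda>i. P \<inter> {y. a i \<bullet> y = - b i}) ` \<sigma>)) face_of P"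
    by (intro face_of_Inter) auto
  moreover have "{y\<in>P. \<forall>i\<in>\<sigma>. inner y (a i) + b i = 0}
      = \<Inter> (insert P ((\<lambda>i. P \<inter> {y. a i \<bullet> y = - b i}) ` \<sigma>))"
  proof -
    have "inner y (a i) + b i = 0 \<longleftrightarrow> a i \<bullet> y = - b i" for y i
      by (auto simp: inner_commute)
    then show ?thesis by blast
  qed
  ultimately show ?thesis by simp
qed

lemma extreme_point_active_normals_span:
  fixes a :: "'i \<Rightarrow> 'a::euclidean_space" and b :: "'i \<Rightarrow> real"
  assumes "finite A"
    and x: "x extreme_point_of {y. \<forall>i\<in>A. inner y (a i) + b i \<ge> 0}"
  shows "span (a ` {i\<in>A. inner x (a i) + b i = 0}) = UNIV"
proof (rule ccontr)
  let ?P = "{y. \<forall>i\<in>A. inner y (a i) + b i \<ge> 0}"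
  let ?I = "{i\<in>A. inner x (a i) + b i = 0}"
  assume "span (a ` ?I) \<noteq> UNIV"
  then obtain d where "d \<noteq> 0" and d_orth: "\<And>v. v \<in> span (a ` ?I) \<Longrightarrow> d \<bullet> v = 0"
    using span_not_UNIV_orthogonal by blast
  have "\<forall>\<^sub>F t in nhds 0. \<forall>i\<in>A - ?I. inner (x + t *\<^sub>R d) (a i) + b i > 0"
  proof (rule eventually_ball_finite)
    show "finite (A - ?I)" using \<open>finite A\<close> by simp
    show "\<forall>i\<in>A - ?I. \<forall>\<^sub>F t in nhds 0. inner (x + t *\<^sub>R d) (a i) + b i > 0"
    proof
      fix i assume i: "i \<in> A - ?I"
      have "inner x (a i) + b i > 0"
        using i x by (auto simp: extreme_point_of_def)
      moreover have "((\<lambda>t. inner x (a i) + b i + t * inner d (a i)) \<longlongrightarrow> inner x (a i) + b i) (nhds 0)"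
        by (auto intro!: tendsto_eq_intros filterlim_ident)
      ultimately have "\<forall>\<^sub>F t in nhds 0. inner x (a i) + b i + t * inner d (a i) > 0"
        by (rule order_tendstoD(1)[rotated])
      then show "\<forall>\<^sub>F t in nhds 0. inner (x + t *\<^sub>R d) (a i) + b i > 0"
        by (simp add: inner_add_left add_ac)
    qed
  qed
  then obtain e :: real where "e > 0"
    and slack: "\<And>t i. \<bar>t\<bar> \<le> e \<Longrightarrow> i \<in> A - ?I \<Longrightarrow> inner (x + t *\<^sub>R d) (a i) + b i > 0"
    unfolding eventually_nhds_metric_le dist_real_def by fastforce
  have perturb: "x + t *\<^sub>R d \<in> ?P" if "\<bar>t\<bar> \<le> e" for t
  proof -
    have "inner (x + t *\<^sub>R d) (a i) + b i = 0" if "i \<in> ?I" for i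
      using that d_orth[of "a i"] by (simp add: inner_add_left span_base)
    then show ?thesis using slack[OF that] by force
  qed
  have "x - e *\<^sub>R d \<in> ?P" "x + e *\<^sub>R d \<in> ?P"
    using perturb[of "- e"] perturb[of e] \<open>e > 0\<close> by simp_all
  moreover have "x \<in> open_segment (x - e *\<^sub>R d) (x + e *\<^sub>R d)"
  proof -
    have "x = midpoint (x - e *\<^sub>R d) (x + e *\<^sub>R d)"
      by (simp add: midpoint_def algebra_simps flip: scaleR_add_left)
    moreover have "x - e *\<^sub>R d \<noteq> x + e *\<^sub>R d"
      using \<open>e > 0\<close> \<open>d \<noteq> 0\<close> by (simp add: algebra_simps flip: scaleR_add_left)
    ultimately show ?thesis by (metis midpoint_in_open_segment)
  qed
  ultimately show False
    using x unfolding extreme_point_of_def by blast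
qed

lemma eq_if_inner_eq_on_spanning:
  fixes x y :: "'a::euclidean_space"
  assumes "span (a ` I) = UNIV" and "\<And>i. i \<in> I \<Longrightarrow> inner y (a i) = inner x (a i)"
  shows "y = x"
proof -
  have "a ` I \<subseteq> {v. (y - x) \<bullet> v = 0}"
    using assms(2) by (auto simp: inner_diff_left)
  then have "span (a ` I) \<subseteq> {v. (y - x) \<bullet> v = 0}"
    by (rule span_minimal[OF _ subspace_hyperplane])
  then have "(y - x) \<bullet> (y - x) = 0"
    using assms(1) by blast
  then show ?thesis by simp
qed

lemma face_contains_maximizing_extreme_point:
  fixes P :: "'a::euclidean_space set"
  assumes "compact P" "convex P" "F face_of P" "F \<noteq> {}"
  obtains x where "x extreme_point_of P" "x \<in> F" "\<And>y. y \<in> F \<Longrightarrow> c \<bullet> y \<le> c \<bullet> x"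
proof -
  have F: "compact F" "convex F"
    using assms face_of_imp_compact face_of_imp_convex by blast+
  obtain z where "z \<in> F" and z_max: "\<And>y. y \<in> F \<Longrightarrow> c \<bullet> y \<le> c \<bullet> z"
    using continuous_attains_sup[OF F(1) assms(4) continuous_on_inner[OF continuous_on_const continuous_on_id]]
    by blast
  let ?S = "F \<inter> {y. c \<bullet> y = c \<bullet> z}"
  have S_face: "?S face_of P"
    using face_of_Int_supporting_hyperplane_le[OF F(2) z_max] assms(3) by (rule face_of_trans)
  have "compact ?S" "convex ?S" "?S \<noteq> {}"
    using F \<open>z \<in> F\<close> by (auto intro!: compact_Int_closed convex_Int closed_hyperplane convex_hyperplane)
  then obtain x where "x extreme_point_of ?S"
    using extreme_point_exists_convex by blast
  then have "x extreme_point_of P" "x \<in> ?S"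
    using extreme_point_of_face[OF S_face] by simp_all
  then show thesis
    using that z_max by simp
qed

lemma hyp_facet: "i \<noteq> 0 \<Longrightarrow> hyp lam eta lam0 xi i = {x. inner x (lam i) + eta i = 0}"
  by (simp add: hyp_def nrm_def ofs_def)

lemma hyp_cut: "hyp lam eta lam0 xi 0 = {x. inner x lam0 + xi = 0}"
  by (simp add: hyp_def nrm_def ofs_def)

lemma Fsig_iff:
  "x \<in> Fsig m lam eta lam0 xi \<sigma> \<longleftrightarrow> x \<in> polyt m lam eta \<and> (\<forall>i\<in>\<sigma>. x \<in> hyp lam eta lam0 xi i)"
  by (auto simp: Fsig_def facet_def)

lemma Fsig_antimono: "\<tau> \<subseteq> \<sigma> \<Longrightarrow> Fsig m lam eta lam0 xi \<sigma> \<subseteq> Fsig m lam eta lam0 xi \<tau>"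
  unfolding Fsig_def by blast

lemma Fsig_facet_indices:
  assumes "\<sigma> \<subseteq> {1..m}"
  shows "Fsig m lam eta lam0 xi \<sigma> = {y \<in> polyt m lam eta. \<forall>i\<in>\<sigma>. inner y (lam i) + eta i = 0}"
proof -
  have "i \<noteq> 0" if "i \<in> \<sigma>" for i
    using that assms by auto
  then show ?thesis
    by (auto simp: Fsig_iff hyp_facet)
qed

lemma Inter_facets_eq_Fsig:
  "\<sigma> \<noteq> {} \<Longrightarrow> \<Inter> (facet m lam eta lam0 xi ` \<sigma>) = Fsig m lam eta lam0 xi \<sigma>"
  by (auto simp: Fsig_def facet_def)

lemma K_plus_eq:
  "K_plus m lam eta lam0 xi =
    insert {} {\<sigma>. \<sigma> \<subseteq> {0..m} \<and> Fsig m lam eta lam0 xi \<sigma> \<inter> Dplus m lam eta lam0 xi \<noteq> {}}"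
proof (rule set_eqI)
  fix \<sigma>
  show "\<sigma> \<in> K_plus m lam eta lam0 xi \<longleftrightarrow>
    \<sigma> \<in> insert {} {\<sigma>. \<sigma> \<subseteq> {0..m} \<and> Fsig m lam eta lam0 xi \<sigma> \<inter> Dplus m lam eta lam0 xi \<noteq> {}}"
    by (cases "\<sigma> = {}") (simp_all add: K_plus_def Inter_facets_eq_Fsig)
qed

lemma K_minus_eq:
  "K_minus m lam eta lam0 xi =
    insert {} {\<sigma>. \<sigma> \<subseteq> {0..m} \<and> Fsig m lam eta lam0 xi \<sigma> \<inter> Dminus m lam eta lam0 xi \<noteq> {}}"
proof (rule set_eqI)
  fix \<sigma>
  show "\<sigma> \<in> K_minus m lam eta lam0 xi \<longleftrightarrow>
    \<sigma> \<in> insert {} {\<sigma>. \<sigma> \<subseteq> {0..m} \<and> Fsig m lam eta lam0 xi \<sigma> \<inter> Dminus m lam eta lam0 xi \<noteq> {}}"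
    by (cases "\<sigma> = {}") (simp_all add: K_minus_def Inter_facets_eq_Fsig)
qed

lemma K_Delta_eq:
  "K_Delta m lam eta lam0 xi = insert {} {\<sigma>. \<sigma> \<subseteq> {1..m} \<and> Fsig m lam eta lam0 xi \<sigma> \<noteq> {}}"
proof (rule set_eqI)
  fix \<sigma>
  show "\<sigma> \<in> K_Delta m lam eta lam0 xi \<longleftrightarrow>
    \<sigma> \<in> insert {} {\<sigma>. \<sigma> \<subseteq> {1..m} \<and> Fsig m lam eta lam0 xi \<sigma> \<noteq> {}}"
    by (cases "\<sigma> = {}") (simp_all add: K_Delta_def Inter_facets_eq_Fsig)
qed

lemma Zset_eq:
  "Zset m lam eta lam0 xi =
    {\<sigma>. \<sigma> \<subseteq> {0..m} \<and> Fsig m lam eta lam0 xi \<sigma> \<noteq> {}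
        \<and> Fsig m lam eta lam0 xi \<sigma> \<inter> Dminus m lam eta lam0 xi = {}}"
proof -
  have "x \<in> Dplus m lam eta lam0 xi - facet m lam eta lam0 xi 0 \<longleftrightarrow> x \<notin> Dminus m lam eta lam0 xi"
    if "x \<in> Fsig m lam eta lam0 xi \<sigma>" for x \<sigma>
    using that by (auto simp: Fsig_iff Dplus_def Dminus_def facet_def hyp_cut)
  then show ?thesis
    unfolding Zset_def by blast
qed

lemma Zset_facet_indices:
  assumes "\<sigma> \<in> Zset m lam eta lam0 xi"
  shows "\<sigma> \<subseteq> {1..m}"
proof -
  have "0 \<notin> \<sigma>"
  proof
    assume "0 \<in> \<sigma>"
    then have "Fsig m lam eta lam0 xi \<sigma> \<subseteq> Fsig m lam eta lam0 xi {0}"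
      by (intro Fsig_antimono) simp
    also have "\<dots> \<subseteq> Dminus m lam eta lam0 xi"
      by (auto simp: Fsig_iff hyp_cut Dminus_def)
    finally have "Fsig m lam eta lam0 xi \<sigma> \<subseteq> Dminus m lam eta lam0 xi" .
    then show False using assms by (auto simp: Zset_eq)
  qed
  moreover have "\<sigma> \<subseteq> {0..m}"
    using assms by (simp add: Zset_def)
  ultimately show ?thesis
    by (metis Suc_leI atLeastAtMost_iff gr0I One_nat_def subset_iff)
qed

lemma generic_cut_normal_not_in_span:
  assumes "generic_cut m lam eta lam0 xi" and "x \<in> facet m lam eta lam0 xi 0"
  shows "lam0 \<notin> span (lam ` {i\<in>{1..m}. inner x (lam i) + eta i = 0})"
proof -
  let ?I = "{i\<in>{1..m}. inner x (lam i) + eta i = 0}"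
  let ?K = "{i\<in>{0..m}. x \<in> hyp lam eta lam0 xi i}"
  have K: "?K = insert 0 ?I"
    using assms(2) by (auto simp: facet_def hyp_facet hyp_cut)
  have "inj_on (nrm lam lam0) ?K" "independent (nrm lam lam0 ` ?K)"
    using assms by (auto simp: generic_cut_def facet_def Let_def)
  moreover have "nrm lam lam0 ` ?K = insert lam0 (lam ` ?I)"
    unfolding K by (force simp: nrm_def)
  moreover have "lam0 \<notin> lam ` ?I"
  proof
    assume "lam0 \<in> lam ` ?I"
    then obtain i where i: "i \<in> ?I" "nrm lam lam0 i = nrm lam lam0 0"
      by (auto simp: nrm_def)
    moreover have "i \<in> ?K" "0 \<in> ?K"
      using i(1) unfolding K by simp_all
    ultimately have "i = 0"
      using \<open>inj_on (nrm lam lam0) ?K\<close> by (metis inj_onD)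
    then show False
      using i(1) by simp
  qed
  ultimately show ?thesis
    by (simp add: independent_insert)
qed

lemma compact_polyt: "simple_polytope m lam eta \<Longrightarrow> compact (polyt m lam eta)"
  using closed_inequalities[of "{1..m}" lam eta]
  by (simp add: simple_polytope_def polyt_def compact_eq_bounded_closed)

lemma convex_polyt: "convex (polyt m lam eta)"
  using convex_inequalities by (simp add: polyt_def)

lemma span_active_normals_extreme_point:
  "x extreme_point_of polyt m lam eta \<Longrightarrow> span (lam ` {i\<in>{1..m}. inner x (lam i) + eta i = 0}) = UNIV"
  using extreme_point_active_normals_span[of "{1..m}" x lam eta] by (simp add: polyt_def)

lemma extreme_point_not_on_cut:
  assumes "generic_cut m lam eta lam0 xi" and "x extreme_point_of polyt m lam eta"
  shows "x \<notin> facet m lam eta lam0 xi 0"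
  using generic_cut_normal_not_in_span[OF assms(1)] span_active_normals_extreme_point[OF assms(2)]
  by blast

lemma Fsig_active_extreme_point:
  assumes x: "x extreme_point_of polyt m lam eta"
  defines "\<rho> \<equiv> {i\<in>{1..m}. inner x (lam i) + eta i = 0}"
  shows "Fsig m lam eta lam0 xi \<rho> = {x}"
proof
  have \<rho>_facets: "\<rho> \<subseteq> {1..m}"
    by (auto simp: \<rho>_def)
  have "x \<in> polyt m lam eta"
    using x by (simp add: extreme_point_of_def)
  then show "{x} \<subseteq> Fsig m lam eta lam0 xi \<rho>"
    unfolding Fsig_facet_indices[OF \<rho>_facets] by (simp add: \<rho>_def)
  show "Fsig m lam eta lam0 xi \<rho> \<subseteq> {x}"
  proof
    fix y assume "y \<in> Fsig m lam eta lam0 xi \<rho>"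
    then have "inner y (lam i) = inner x (lam i)" if "i \<in> \<rho>" for i
      using that unfolding Fsig_facet_indices[OF \<rho>_facets] by (auto simp: \<rho>_def)
    then show "y \<in> {x}"
      using eq_if_inner_eq_on_spanning span_active_normals_extreme_point[OF x]
      unfolding \<rho>_def by blast
  qed
qed

lemma exists_Zset_superset:
  assumes sp: "simple_polytope m lam eta" and gc: "generic_cut m lam eta lam0 xi"
    and \<sigma>: "\<sigma> \<subseteq> {1..m}"
    and meets: "Fsig m lam eta lam0 xi \<sigma> \<inter> Dplus m lam eta lam0 xi \<noteq> {}"
  obtains \<rho> where "\<sigma> \<subseteq> \<rho>" "\<rho> \<in> Zset m lam eta lam0 xi"
proof -
  let ?F = "Fsig m lam eta lam0 xi \<sigma>"
  have "?F face_of polyt m lam eta"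
    using face_of_inequalities_active[OF \<sigma>, of lam eta] by (simp add: Fsig_facet_indices[OF \<sigma>] polyt_def)
  then obtain x where x: "x extreme_point_of polyt m lam eta" "x \<in> ?F"
    and x_max: "\<And>y. y \<in> ?F \<Longrightarrow> lam0 \<bullet> y \<le> lam0 \<bullet> x"
    using face_contains_maximizing_extreme_point[OF compact_polyt[OF sp] convex_polyt] meets by blast
  define \<rho> where "\<rho> = {i\<in>{1..m}. inner x (lam i) + eta i = 0}"
  have "x \<in> Dplus m lam eta lam0 xi"
  proof -
    obtain w where "w \<in> ?F" "w \<in> Dplus m lam eta lam0 xi"
      using meets by blast
    then have "0 \<le> inner w lam0 + xi" "lam0 \<bullet> w \<le> lam0 \<bullet> x"
      using x_max by (simp_all add: Dplus_def)
    then show ?thesis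
      using x(2) by (simp add: Dplus_def Fsig_iff inner_commute)
  qed
  moreover have "x \<notin> facet m lam eta lam0 xi 0"
    using extreme_point_not_on_cut[OF gc x(1)] .
  moreover have "Fsig m lam eta lam0 xi \<rho> = {x}"
    using Fsig_active_extreme_point[OF x(1)] by (simp add: \<rho>_def)
  moreover have "\<rho> \<subseteq> {0..m}"
    by (auto simp: \<rho>_def)
  ultimately have "\<rho> \<in> Zset m lam eta lam0 xi"
    by (simp add: Zset_def)
  moreover have "\<sigma> \<subseteq> \<rho>"
    using x(2) \<sigma> by (auto simp: Fsig_facet_indices[OF \<sigma>] \<rho>_def)
  ultimately show thesis
    using that by blast
qed

lemma K_plus_Int_K_Delta:
  assumes "facet m lam eta lam0 xi 0 \<noteq> {}"
  shows "K_plus m lam eta lam0 xi \<inter> K_Delta m lam eta lam0 xi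
    = {\<sigma>. \<sigma> \<subseteq> {1..m} \<and> Fsig m lam eta lam0 xi \<sigma> \<inter> Dplus m lam eta lam0 xi \<noteq> {}}"
proof (rule set_eqI)
  fix \<sigma>
  have "facet m lam eta lam0 xi 0 \<subseteq> Fsig m lam eta lam0 xi {} \<inter> Dplus m lam eta lam0 xi"
    by (auto simp: Fsig_def facet_def hyp_cut Dplus_def)
  with assms have "Fsig m lam eta lam0 xi {} \<inter> Dplus m lam eta lam0 xi \<noteq> {}"
    by auto
  then show "\<sigma> \<in> K_plus m lam eta lam0 xi \<inter> K_Delta m lam eta lam0 xi \<longleftrightarrow>
    \<sigma> \<in> {\<sigma>. \<sigma> \<subseteq> {1..m} \<and> Fsig m lam eta lam0 xi \<sigma> \<inter> Dplus m lam eta lam0 xi \<noteq> {}}"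
    by (cases "\<sigma> = {}") (auto simp: K_plus_eq K_Delta_eq)
qed

lemma sc_closure_Zset:
  assumes "simple_polytope m lam eta" and "generic_cut m lam eta lam0 xi"
  shows "sc_closure (Zset m lam eta lam0 xi)
    = {\<sigma>. \<sigma> \<subseteq> {1..m} \<and> Fsig m lam eta lam0 xi \<sigma> \<inter> Dplus m lam eta lam0 xi \<noteq> {}}"
proof (intro set_eqI iffI)
  fix \<tau> assume "\<tau> \<in> sc_closure (Zset m lam eta lam0 xi)"
  then obtain \<rho> where "\<tau> \<subseteq> \<rho>" and \<rho>: "\<rho> \<in> Zset m lam eta lam0 xi"
    by (auto simp: sc_closure_def)
  then have "Fsig m lam eta lam0 xi \<rho> \<noteq> {}" "Fsig m lam eta lam0 xi \<rho> \<subseteq> Dplus m lam eta lam0 xi"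
    by (auto simp: Zset_def)
  then have "Fsig m lam eta lam0 xi \<tau> \<inter> Dplus m lam eta lam0 xi \<noteq> {}"
    using Fsig_antimono[OF \<open>\<tau> \<subseteq> \<rho>\<close>] by blast
  moreover have "\<tau> \<subseteq> {1..m}"
    using \<open>\<tau> \<subseteq> \<rho>\<close> Zset_facet_indices[OF \<rho>] by blast
  ultimately show "\<tau> \<in> {\<sigma>. \<sigma> \<subseteq> {1..m} \<and> Fsig m lam eta lam0 xi \<sigma> \<inter> Dplus m lam eta lam0 xi \<noteq> {}}"
    by simp
next
  fix \<tau> assume "\<tau> \<in> {\<sigma>. \<sigma> \<subseteq> {1..m} \<and> Fsig m lam eta lam0 xi \<sigma> \<inter> Dplus m lam eta lam0 xi \<noteq> {}}"
  then obtain \<rho> where "\<tau> \<subseteq> \<rho>" "\<rho> \<in> Zset m lam eta lam0 xi"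
    using exists_Zset_superset[OF assms] by blast
  then show "\<tau> \<in> sc_closure (Zset m lam eta lam0 xi)"
    by (auto simp: sc_closure_def)
qed

lemma K_plus_Un_K_Delta_minus_K_minus:
  assumes "facet m lam eta lam0 xi 0 \<noteq> {}"
  shows "(K_plus m lam eta lam0 xi \<union> K_Delta m lam eta lam0 xi) - K_minus m lam eta lam0 xi
    = Zset m lam eta lam0 xi"
proof (rule set_eqI)
  fix \<sigma>
  let ?F = "Fsig m lam eta lam0 xi"
  have "?F \<sigma> \<subseteq> Dplus m lam eta lam0 xi" if "?F \<sigma> \<inter> Dminus m lam eta lam0 xi = {}"
    using that by (auto simp: Fsig_iff Dplus_def Dminus_def)
  moreover have "facet m lam eta lam0 xi 0 \<subseteq> ?F {} \<inter> Dminus m lam eta lam0 xi"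
    by (auto simp: Fsig_def facet_def hyp_cut Dminus_def)
  with assms have "?F {} \<inter> Dminus m lam eta lam0 xi \<noteq> {}"
    by auto
  ultimately show "\<sigma> \<in> (K_plus m lam eta lam0 xi \<union> K_Delta m lam eta lam0 xi) - K_minus m lam eta lam0 xi
    \<longleftrightarrow> \<sigma> \<in> Zset m lam eta lam0 xi"
    by (cases "\<sigma> = {}") (auto simp: K_plus_eq K_Delta_eq K_minus_eq Zset_eq)
qed

theorem lemma3p10:
  fixes m :: nat and lam :: "nat \<Rightarrow> 'a::euclidean_space" and eta :: "nat \<Rightarrow> real"
    and lam0 :: 'a and xi :: real
  assumes "simple_polytope m lam eta"
    and "generic_cut m lam eta lam0 xi"
  shows "K_plus m lam eta lam0 xi \<inter> K_Delta m lam eta lam0 xi = sc_closure (Zset m lam eta lam0 xi)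
    \<and> (K_plus m lam eta lam0 xi \<union> K_Delta m lam eta lam0 xi) - K_minus m lam eta lam0 xi
           = Zset m lam eta lam0 xi"
proof -
  have "facet m lam eta lam0 xi 0 \<noteq> {}"
    using assms(2) by (simp add: generic_cut_def)
  then show ?thesis
    by (simp add: K_plus_Int_K_Delta sc_closure_Zset[OF assms] K_plus_Un_K_Delta_minus_K_minus)
qed

end
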